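(* Let $A$ be a unital C*-algebra, $\mathcal H$ a Hilbert $A$-module and $\{x_j : j\in\mathbb J\}$ a standard frame of $\mathcal H$. Suppose $\{y_j : j\in\mathbb J\}$ and $\{z_j : j\in\mathbb J\}$ are two standard alternate dual frames of $\{x_j\}$ which are connected by an invertible adjointable bounded $A$-linear operator $T$ on $\mathcal H$ via $z_j=T(y_j)$ for all $j\in\mathbb J$. Then $T=\mathrm{id}_{\mathcal H}$. In other words, two different standard alternate dual frames of a given standard frame are neither similar nor unitarily equivalent.
   Context: A (left) Hilbert $A$-module is a left $A$-module $\mathcal H$ with an $A$-valued inner product $\langle\cdot,\cdot\rangle$, $A$-linear in the first argument, with $\langle x,y\rangle=\langle y,x\rangle^*$, $\langle x,x\rangle\ge0$ and $=0$ only for $x=0$, complete in $\|x\|=\|\langle x,x\rangle\|^{1/2}$. A sequence $\{x_j:j\in\mathbb J\}$ ($\mathbb J$ finite or countable) is a frame if there are $C,D>0$ with $C\langle x,x\rangle\le\sum_j\langle x,x_j\rangle\langle x_j,x\rangle\le D\langle x,x\rangle$ for all $x$; standard if this series converges in norm for all $x$. A standard alternate dual frame of $\{x_j\}$ is a standard frame $\{y_j:j\in\mathbb J\}$ of $\mathcal H$ with $x=\sum_j\langle x,y_j\rangle x_j$ for every $x\in\mathcal H$. Two frames $\{y_j\},\{z_j\}$ are similar if $z_j=T(y_j)$ for all $j$ for some invertible adjointable bounded $A$-linear $T$, and unitarily equivalent if $T$ can be taken unitary. *)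

theory Defs
  imports "HOL-Analysis.Analysis"
begin

class cstar_algebra = real_normed_algebra_1 + banach +
  fixes scaleC :: "complex \<Rightarrow> 'a \<Rightarrow> 'a"
    and invol :: "'a \<Rightarrow> 'a"
  assumes scaleC_of_real: "scaleC (complex_of_real r) a = scaleR r a"
    and scaleC_add_left: "scaleC (c + d) a = scaleC c a + scaleC d a"
    and scaleC_add_right: "scaleC c (a + b) = scaleC c a + scaleC c b"
    and scaleC_scaleC: "scaleC c (scaleC d a) = scaleC (c * d) a"
    and scaleC_one: "scaleC 1 a = a"
    and scaleC_mult_left: "scaleC c (a * b) = scaleC c a * b"
    and scaleC_mult_right: "scaleC c (a * b) = a * scaleC c b"
    and norm_scaleC: "norm (scaleC c a) = cmod c * norm a"
    and invol_invol: "invol (invol a) = a"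
    and invol_add: "invol (a + b) = invol a + invol b"
    and invol_mult: "invol (a * b) = invol b * invol a"
    and invol_scaleC: "invol (scaleC c a) = scaleC (cnj c) (invol a)"
    and cstar_identity: "norm (invol a * a) = (norm a)\<^sup>2"

definition cpos :: "'a::cstar_algebra \<Rightarrow> bool" where
  "cpos a \<longleftrightarrow> (\<exists>b. a = invol b * b)"

definition cle :: "'a::cstar_algebra \<Rightarrow> 'a \<Rightarrow> bool" where
  "cle a b \<longleftrightarrow> cpos (b - a)"

definition hnorm :: "('h \<Rightarrow> 'h \<Rightarrow> 'a::cstar_algebra) \<Rightarrow> 'h \<Rightarrow> real" where
  "hnorm ip x = sqrt (norm (ip x x))"

definition hilbert_module ::
  "('a::cstar_algebra \<Rightarrow> 'h::ab_group_add \<Rightarrow> 'h) \<Rightarrow> ('h \<Rightarrow> 'h \<Rightarrow> 'a) \<Rightarrow> bool" where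
  "hilbert_module act ip \<longleftrightarrow>
     (\<forall>a b x. act (a + b) x = act a x + act b x) \<and>
     (\<forall>a x y. act a (x + y) = act a x + act a y) \<and>
     (\<forall>a b x. act (a * b) x = act a (act b x)) \<and>
     (\<forall>x. act 1 x = x) \<and>
     (\<forall>a x y z. ip (act a x + y) z = a * ip x z + ip y z) \<and>
     (\<forall>x y. ip x y = invol (ip y x)) \<and>
     (\<forall>x. cpos (ip x x)) \<and>
     (\<forall>x. ip x x = 0 \<longrightarrow> x = 0) \<and>
     (\<forall>X. (\<forall>e>0. \<exists>N. \<forall>m\<ge>N. \<forall>n\<ge>N. hnorm ip (X m - X n) < e) \<longrightarrow>
          (\<exists>L. (\<lambda>n. hnorm ip (X n - L)) \<longlonglongrightarrow> 0))"

text \<open>Index sets are subsets of \<open>nat\<close> (finite or countable); series are summed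
  along the partial sums over \<open>J \<inter> {..<n}\<close> and converge in norm.\<close>

definition hsums :: "('h \<Rightarrow> 'h \<Rightarrow> 'a::cstar_algebra) \<Rightarrow> (nat \<Rightarrow> 'h::ab_group_add) \<Rightarrow> nat set \<Rightarrow> 'h \<Rightarrow> bool" where
  "hsums ip f J s \<longleftrightarrow> (\<lambda>n. hnorm ip ((\<Sum>j\<in>J \<inter> {..<n}. f j) - s)) \<longlonglongrightarrow> 0"

definition standard_frame ::
  "('a::cstar_algebra \<Rightarrow> 'h::ab_group_add \<Rightarrow> 'h) \<Rightarrow> ('h \<Rightarrow> 'h \<Rightarrow> 'a) \<Rightarrow> (nat \<Rightarrow> 'h) \<Rightarrow> nat set \<Rightarrow> bool" where
  "standard_frame act ip x J \<longleftrightarrow>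
     (\<exists>C D. C > 0 \<and> D > 0 \<and>
       (\<forall>v. \<exists>s. (\<lambda>n. \<Sum>j\<in>J \<inter> {..<n}. ip v (x j) * ip (x j) v) \<longlonglongrightarrow> s \<and>
              cle (scaleR C (ip v v)) s \<and> cle s (scaleR D (ip v v))))"

definition standard_alt_dual ::
  "('a::cstar_algebra \<Rightarrow> 'h::ab_group_add \<Rightarrow> 'h) \<Rightarrow> ('h \<Rightarrow> 'h \<Rightarrow> 'a) \<Rightarrow> (nat \<Rightarrow> 'h) \<Rightarrow> (nat \<Rightarrow> 'h) \<Rightarrow> nat set \<Rightarrow> bool" where
  "standard_alt_dual act ip x y J \<longleftrightarrow>
     standard_frame act ip y J \<and> (\<forall>v. hsums ip (\<lambda>j. act (ip v (y j)) (x j)) J v)"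

definition module_linear :: "('a::cstar_algebra \<Rightarrow> 'h::ab_group_add \<Rightarrow> 'h) \<Rightarrow> ('h \<Rightarrow> 'h) \<Rightarrow> bool" where
  "module_linear act T \<longleftrightarrow> (\<forall>a x y. T (act a x + y) = act a (T x) + T y)"

definition hbounded :: "('h \<Rightarrow> 'h \<Rightarrow> 'a::cstar_algebra) \<Rightarrow> ('h \<Rightarrow> 'h) \<Rightarrow> bool" where
  "hbounded ip T \<longleftrightarrow> (\<exists>K. \<forall>x. hnorm ip (T x) \<le> K * hnorm ip x)"

definition adjointable :: "('h \<Rightarrow> 'h \<Rightarrow> 'a::cstar_algebra) \<Rightarrow> ('h \<Rightarrow> 'h) \<Rightarrow> bool" where
  "adjointable ip T \<longleftrightarrow> (\<exists>S. \<forall>x y. ip (T x) y = ip x (S y))"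

definition good_operator ::
  "('a::cstar_algebra \<Rightarrow> 'h::ab_group_add \<Rightarrow> 'h) \<Rightarrow> ('h \<Rightarrow> 'h \<Rightarrow> 'a) \<Rightarrow> ('h \<Rightarrow> 'h) \<Rightarrow> bool" where
  "good_operator act ip T \<longleftrightarrow> module_linear act T \<and> hbounded ip T \<and> adjointable ip T"

definition invertible_operator ::
  "('a::cstar_algebra \<Rightarrow> 'h::ab_group_add \<Rightarrow> 'h) \<Rightarrow> ('h \<Rightarrow> 'h \<Rightarrow> 'a) \<Rightarrow> ('h \<Rightarrow> 'h) \<Rightarrow> bool" where
  "invertible_operator act ip T \<longleftrightarrow> good_operator act ip T \<and>
     (\<exists>S. good_operator act ip S \<and> T \<circ> S = id \<and> S \<circ> T = id)"

end

theory Submission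
  imports Defs "HOL-Computational_Algebra.Formal_Power_Series"
begin

text \<open>Let \<open>S\<close> be the adjoint of \<open>T\<close>. For every \<open>v\<close>, the reconstruction formula of \<open>y\<close> at \<open>S v\<close> and
  that of \<open>z\<close> at \<open>v\<close> are the same series, because \<open>\<langle>S v, y\<^sub>j\<rangle> = \<langle>v, T y\<^sub>j\<rangle> = \<langle>v, z\<^sub>j\<rangle>\<close>.
  Hence \<open>S v = v\<close>, so \<open>S = id\<close> and \<open>T = id\<close>.

  The one analytic ingredient is uniqueness of limits for \<open>\<parallel>\<langle>u, u\<rangle>\<parallel>\<^sup>1\<^sup>/\<^sup>2\<close>, which follows from the
  parallelogram law once the norm of \<open>A\<close> is known to be monotone on sums of elements \<open>\<langle>u, u\<rangle>\<close>.
  Since these are only known to be of the form \<open>b\<^sup>* b\<close>, this needs the theorem of Fukamiya and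
  Kelley-Vaught that such elements are positive, whose proof in turn rests on square roots of
  positive elements, obtained from the binomial series.\<close>

lemma invol_zero [simp]: "invol (0::'a::cstar_algebra) = 0"
  by (metis add_cancel_left_right invol_add)

lemma invol_minus [simp]: "invol (- a) = - invol (a::'a::cstar_algebra)"
  by (metis add.right_inverse add_eq_0_iff invol_add invol_zero)

lemma invol_diff: "invol (a - b) = invol a - invol (b::'a::cstar_algebra)"
  using invol_add[of a "- b"] by simp

lemma invol_one [simp]: "invol (1::'a::cstar_algebra) = 1"
  by (metis invol_invol invol_mult mult_1_left)

lemma invol_scaleR: "invol (r *\<^sub>R a) = r *\<^sub>R invol (a::'a::cstar_algebra)"
  by (metis complex_cnj_complex_of_real invol_scaleC scaleC_of_real)

lemma invol_of_real [simp]: "invol (of_real r :: 'a::cstar_algebra) = of_real r"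
  by (simp add: of_real_def invol_scaleR)

lemma invol_power: "invol (a ^ n) = invol (a::'a::cstar_algebra) ^ n"
  by (induction n) (auto simp: invol_mult power_commutes)

lemma norm_invol [simp]: "norm (invol (a::'a::cstar_algebra)) = norm a"
proof -
  have le: "norm b \<le> norm (invol b)" for b :: 'a
  proof (cases "b = 0")
    case False
    have "(norm b)\<^sup>2 = norm (invol b * b)" by (simp add: cstar_identity)
    also have "\<dots> \<le> norm (invol b) * norm b" by (rule norm_mult_ineq)
    finally show ?thesis using False by (simp add: power2_eq_square)
  qed simp
  show ?thesis using le[of a] le[of "invol a"] by (simp add: invol_invol)
qed

lemma bounded_linear_invol: "bounded_linear (invol :: 'a::cstar_algebra \<Rightarrow> 'a)"
  by (rule bounded_linear_intro[where K = 1]) (simp_all add: invol_add invol_scaleR)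

lemma norm_mult_self_selfadjoint: "invol h = h \<Longrightarrow> norm (h * h) = (norm (h::'a::cstar_algebra))\<^sup>2"
  by (metis cstar_identity)

lemma selfadjoint_mult_commuting:
  "invol a = a \<Longrightarrow> invol b = b \<Longrightarrow> a * b = b * a \<Longrightarrow> invol (a * b) = a * (b::'a::cstar_algebra)"
  by (simp add: invol_mult)

lemma scaleC_zero_right [simp]: "scaleC c (0::'a::cstar_algebra) = 0"
  by (metis add_cancel_left_right scaleC_add_right)

lemma scaleC_minus_right: "scaleC c (- a) = - scaleC c (a::'a::cstar_algebra)"
  by (metis add.right_inverse add_eq_0_iff scaleC_add_right scaleC_zero_right)

lemma scaleC_minus_left: "scaleC (- c) a = - scaleC c (a::'a::cstar_algebra)"
  using scaleC_scaleC[of "-1" c a] scaleC_of_real[of "-1" "scaleC c a"] by simp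

lemma scaleC_ii_ii: "scaleC \<i> (scaleC \<i> a) = - (a::'a::cstar_algebra)"
  using scaleC_scaleC[of \<i> \<i> a] scaleC_of_real[of "-1" a] by simp

lemma scaleC_ii_mult_self: "scaleC \<i> m * scaleC \<i> m = - (m * (m::'a::cstar_algebra))"
  by (metis scaleC_ii_ii scaleC_mult_left scaleC_mult_right)

lemma invol_scaleC_ii: "invol (scaleC \<i> a) = - scaleC \<i> (invol (a::'a::cstar_algebra))"
  by (simp add: invol_scaleC scaleC_minus_left)

definition invertible_elem :: "'a::monoid_mult \<Rightarrow> bool" where
  "invertible_elem a \<longleftrightarrow> (\<exists>b. a * b = 1 \<and> b * a = 1)"

lemma invertible_elem_one_minus:
  fixes x :: "'a::{real_normed_algebra_1,banach}"
  assumes "norm x < 1"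
  shows "invertible_elem (1 - x)"
proof -
  have "summable (\<lambda>n. norm x ^ n)" using assms by (simp add: summable_geometric)
  then have "summable (\<lambda>n. norm (x ^ n))"
    by (rule summable_comparison_test') (simp add: norm_power_ineq)
  then have s: "summable (\<lambda>n. x ^ n)" by (rule summable_norm_cancel)
  define S where "S = (\<Sum>n. x ^ n)"
  have tail: "(\<Sum>n. x ^ Suc n) = S - 1"
    using suminf_split_head[OF s] by (simp add: S_def)
  have "x * S = (\<Sum>n. x * x ^ n)" unfolding S_def by (rule suminf_mult[OF s, symmetric])
  then have left: "x * S = S - 1" using tail by simp
  have "S * x = (\<Sum>n. x ^ n * x)" unfolding S_def using suminf_mult2[OF s, of x] by simp
  then have right: "S * x = S - 1" using tail by (simp add: power_commutes)
  from left right have "(1 - x) * S = 1" "S * (1 - x) = 1"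
    by (simp_all add: left_diff_distrib right_diff_distrib)
  then show ?thesis unfolding invertible_elem_def by blast
qed

lemma invertible_elem_near_one:
  "norm (1 - y) < 1 \<Longrightarrow> invertible_elem (y::'a::{real_normed_algebra_1,banach})"
  using invertible_elem_one_minus[of "1 - y"] by simp

lemma invertible_elem_scaleR:
  "invertible_elem y \<Longrightarrow> c \<noteq> 0 \<Longrightarrow> invertible_elem (c *\<^sub>R (y::'a::real_algebra_1))"
  unfolding invertible_elem_def
    by (metis mult_scaleR_left mult_scaleR_right scaleR_one scaleR_scaleR
      divide_self_if times_divide_eq_left mult_1)

lemma invertible_elem_commuting_factor:
  fixes a b :: "'a::monoid_mult"
  assumes "invertible_elem (a * b)" "a * b = b * a"
  shows "invertible_elem a"
proof -
  obtain w where w: "a * b * w = 1" "w * (a * b) = 1"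
    using assms(1) unfolding invertible_elem_def by blast
  have "w * a = w * a * (a * b * w)" using w by simp
  also have "\<dots> = w * (a * (a * b)) * w" by (simp add: mult.assoc)
  also have "\<dots> = w * ((a * b) * a) * w" using assms(2) by (metis mult.assoc)
  also have "\<dots> = w * (a * b) * a * w" by (simp add: mult.assoc)
  also have "\<dots> = a * w" using w by simp
  finally have "(b * w) * a = 1" using w assms(2) by (metis mult.assoc)
  moreover have "a * (b * w) = 1" using w by (simp add: mult.assoc)
  ultimately show ?thesis unfolding invertible_elem_def by blast
qed

lemma of_real_mult_commute: "of_real r * a = a * (of_real r :: 'a::real_algebra_1)"
  by (simp add: of_real_def)

text \<open>Jacobson's lemma: if \<open>l + x y\<close> has inverse \<open>w\<close>, then \<open>(1 - y w x) / l\<close> inverts \<open>l + y x\<close>.\<close>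
lemma invertible_elem_of_real_add_mult_swap:
  fixes x y :: "'a::real_algebra_1"
  assumes "invertible_elem (of_real l + x * y)" "l \<noteq> 0"
  shows "invertible_elem (of_real l + y * x)"
proof -
  obtain w where w: "(of_real l + x * y) * w = 1" "w * (of_real l + x * y) = 1"
    using assms(1) unfolding invertible_elem_def by blast
  have "(of_real l + y * x) * (1 - y * w * x)
      = of_real l + y * x - y * ((of_real l + x * y) * w) * x"
    by (simp add: algebra_simps of_real_mult_commute)
  then have right: "(of_real l + y * x) * (1 - y * w * x) = of_real l" using w by simp
  have "(1 - y * w * x) * (of_real l + y * x)
      = of_real l + y * x - y * (w * (of_real l + x * y)) * x"
    by (simp add: algebra_simps of_real_mult_commute)
  then have left: "(1 - y * w * x) * (of_real l + y * x) = of_real l" using w by simp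
  have "(of_real l + y * x) * (of_real (1 / l) * (1 - y * w * x)) = 1"
    using right assms(2)
      by (metis mult.assoc of_real_mult_commute of_real_mult nonzero_divide_eq_eq of_real_1
        mult_1_left)
  moreover have "(of_real (1 / l) * (1 - y * w * x)) * (of_real l + y * x) = 1"
    using left assms(2) by (metis mult.assoc of_real_mult nonzero_divide_eq_eq of_real_1)
  ultimately show ?thesis unfolding invertible_elem_def by blast
qed

lemma selfadjoint_inverse:
  fixes a r :: "'a::cstar_algebra"
  assumes "invol a = a" "a * r = 1" "r * a = 1"
  shows "invol r = r"
proof -
  have "invol r * a = 1" using arg_cong[OF assms(2), of invol] assms(1) by (simp add: invol_mult)
  then have "invol r = invol r * (a * r)" using assms by simp
  also have "\<dots> = r" using \<open>invol r * a = 1\<close> by (simp add: mult.assoc[symmetric])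
  finally show ?thesis .
qed

section \<open>Square roots by the binomial series\<close>

definition sqrt_coeff :: "nat \<Rightarrow> real" where
  "sqrt_coeff n = (-1) ^ n * ((1/2) gchoose n)"

definition sqrt_one_minus :: "'a::{real_normed_algebra_1,banach} \<Rightarrow> 'a" where
  "sqrt_one_minus x = (\<Sum>n. sqrt_coeff n *\<^sub>R x ^ n)"

lemma sqrt_coeff_0 [simp]: "sqrt_coeff 0 = 1"
  by (simp add: sqrt_coeff_def)

lemma sqrt_coeff_Suc: "sqrt_coeff (Suc k) = sqrt_coeff k * (of_nat k - 1/2) / of_nat (Suc k)"
proof -
  have rec: "((1/2::real) gchoose Suc k) = ((1/2) gchoose k) * (1/2 - of_nat k) / of_nat (Suc k)"
    using gbinomial_mult_1[of "1/2::real" k] by (simp add: field_simps del: of_nat_Suc)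
  show ?thesis unfolding sqrt_coeff_def rec by (simp add: field_simps)
qed

lemma sqrt_coeff_nonpos: "n \<ge> 1 \<Longrightarrow> sqrt_coeff n \<le> 0"
proof (induction n rule: dec_induct)
  case base
  then show ?case by (simp add: sqrt_coeff_def)
next
  case (step k)
  then show ?case by (simp add: sqrt_coeff_Suc divide_nonpos_pos mult_nonpos_nonneg)
qed

lemma sum_sqrt_coeff_nonneg: "0 \<le> (\<Sum>k\<le>m. sqrt_coeff k)"
proof -
  have "(\<Sum>k\<le>m. sqrt_coeff k) = (\<Sum>k\<le>m. ((1/2::real) gchoose k) * (- 1) ^ k)"
    by (simp add: sqrt_coeff_def mult.commute)
  also have "\<dots> = (- 1) ^ m * ((1/2 - 1::real) gchoose m)" by (rule gbinomial_sum_lower_neg)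
  also have "\<dots> = ((of_nat m - 1/2) gchoose m)"
    by (subst gbinomial_negated_upper) (simp add: power_mult_distrib[symmetric])
  also have "\<dots> \<ge> 0"
    unfolding gbinomial_prod_rev by (intro divide_nonneg_pos prod_nonneg) auto
  finally show ?thesis .
qed

lemma sum_abs_sqrt_coeff: "(\<Sum>k\<le>m. \<bar>sqrt_coeff k\<bar>) = 2 - (\<Sum>k\<le>m. sqrt_coeff k)"
proof (induction m)
  case (Suc m)
  then show ?case using sqrt_coeff_nonpos[of "Suc m"] by simp
qed simp

lemma summable_abs_sqrt_coeff: "summable (\<lambda>n. \<bar>sqrt_coeff n\<bar>)"
  by (rule bounded_imp_summable[where B = 2]) (auto simp: sum_abs_sqrt_coeff sum_sqrt_coeff_nonneg)

lemma suminf_abs_sqrt_coeff_le: "(\<Sum>n. \<bar>sqrt_coeff n\<bar>) \<le> 2"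
  using summable_LIMSEQ'[OF summable_abs_sqrt_coeff]
  by (rule LIMSEQ_le_const2) (auto simp: sum_abs_sqrt_coeff sum_sqrt_coeff_nonneg)

lemma sqrt_coeff_convolution:
  "(\<Sum>i\<le>k. sqrt_coeff i * sqrt_coeff (k - i)) = (if k = 0 then 1 else if k = 1 then -1 else 0)"
proof -
  have "(\<Sum>i\<le>k. sqrt_coeff i * sqrt_coeff (k - i))
      = (\<Sum>i\<le>k. (-1) ^ k * (((1/2::real) gchoose i) * ((1/2) gchoose (k - i))))"
    by (intro sum.cong refl) (simp add: sqrt_coeff_def power_add[symmetric])
  also have "\<dots> = (-1) ^ k * (\<Sum>i=0..k. ((1/2::real) gchoose i) * ((1/2) gchoose (k - i)))"
    by (simp add: sum_distrib_left atMost_atLeast0)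
  also have "\<dots> = (-1) ^ k * ((1/2 + 1/2::real) gchoose k)" by (simp only: gbinomial_Vandermonde)
  also have "\<dots> = (-1) ^ k * real (1 choose k)" by (simp add: binomial_gbinomial)
  also have "\<dots> = (if k = 0 then 1 else if k = 1 then -1 else 0)"
    by (cases k) (auto simp: binomial_eq_0)
  finally show ?thesis .
qed

lemma norm_sqrt_series_term_le:
  fixes x :: "'a::real_normed_algebra_1"
  assumes "norm x \<le> 1"
  shows "norm (sqrt_coeff n *\<^sub>R x ^ n) \<le> \<bar>sqrt_coeff n\<bar>"
proof -
  have "norm (x ^ n) \<le> 1"
    using order_trans[OF norm_power_ineq power_le_one[OF norm_ge_zero assms]] .
  then show ?thesis by (simp add: mult_left_le)
qed

lemma summable_norm_sqrt_series:
  "norm (x::'a::real_normed_algebra_1) \<le> 1 \<Longrightarrow> summable (\<lambda>n. norm (sqrt_coeff n *\<^sub>R x ^ n))"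
  by (rule summable_comparison_test'[OF summable_abs_sqrt_coeff])
    (use norm_sqrt_series_term_le in auto)

lemma summable_sqrt_series:
  "norm (x::'a::{real_normed_algebra_1,banach}) \<le> 1 \<Longrightarrow> summable (\<lambda>n. sqrt_coeff n *\<^sub>R x ^ n)"
  by (rule summable_norm_cancel[OF summable_norm_sqrt_series])

lemma sqrt_one_minus_square:
  fixes x :: "'a::{real_normed_algebra_1,banach}"
  assumes "norm x \<le> 1"
  shows "sqrt_one_minus x * sqrt_one_minus x = 1 - x"
proof -
  define f :: "nat \<Rightarrow> 'a" where
    "f k = (if k = 0 then 1 else if k = 1 then -1 else (0::real)) *\<^sub>R x ^ k" for k
  have "(\<lambda>k. \<Sum>i\<le>k. sqrt_coeff i *\<^sub>R x ^ i * (sqrt_coeff (k - i) *\<^sub>R x ^ (k - i)))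
      sums (sqrt_one_minus x * sqrt_one_minus x)"
    unfolding sqrt_one_minus_def
    by (rule Cauchy_product_sums; rule summable_norm_sqrt_series[OF assms])
  moreover have "(\<Sum>i\<le>k. sqrt_coeff i *\<^sub>R x ^ i * (sqrt_coeff (k - i) *\<^sub>R x ^ (k - i))) = f k" for k
  proof -
    have "(\<Sum>i\<le>k. sqrt_coeff i *\<^sub>R x ^ i * (sqrt_coeff (k - i) *\<^sub>R x ^ (k - i)))
        = (\<Sum>i\<le>k. (sqrt_coeff i * sqrt_coeff (k - i)) *\<^sub>R x ^ k)"
      by (intro sum.cong refl) (simp add: power_add[symmetric])
    also have "\<dots> = (\<Sum>i\<le>k. sqrt_coeff i * sqrt_coeff (k - i)) *\<^sub>R x ^ k"
      by (simp add: scaleR_sum_left)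
    finally show ?thesis by (simp only: sqrt_coeff_convolution f_def)
  qed
  ultimately have "f sums (sqrt_one_minus x * sqrt_one_minus x)" by simp
  moreover have "f sums (1 - x)"
  proof -
    have "(\<lambda>k. f (Suc (Suc k))) sums 0" by (simp add: f_def)
    then have "(\<lambda>k. f (Suc k)) sums (0 + f 1)" using sums_Suc_iff[of "\<lambda>k. f (Suc k)" 0] by simp
    then have "f sums (0 + f 1 + f 0)" using sums_Suc_iff[of f "0 + f 1"] by simp
    then show ?thesis by (simp add: f_def)
  qed
  ultimately show ?thesis using sums_unique2 by metis
qed

lemma norm_one_minus_sqrt_one_minus_le:
  fixes x :: "'a::{real_normed_algebra_1,banach}"
  assumes "norm x \<le> 1"
  shows "norm (1 - sqrt_one_minus x) \<le> 1"
proof -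
  let ?a = "\<lambda>n. sqrt_coeff n *\<^sub>R x ^ n"
  have sa: "summable (\<lambda>n. norm (?a (Suc n)))"
    using summable_norm_sqrt_series[OF assms] by (subst summable_Suc_iff)
  have "sqrt_one_minus x = (\<Sum>n. ?a (Suc n)) + 1"
    unfolding sqrt_one_minus_def
    using suminf_split_head[OF summable_sqrt_series[OF assms]] by simp
  then have "norm (1 - sqrt_one_minus x) = norm (\<Sum>n. ?a (Suc n))"
    by (metis add_diff_cancel_right' norm_minus_commute)
  also have "\<dots> \<le> (\<Sum>n. norm (?a (Suc n)))" by (rule summable_norm[OF sa])
  also have "\<dots> \<le> (\<Sum>n. \<bar>sqrt_coeff (Suc n)\<bar>)"
    using summable_abs_sqrt_coeff
    by (intro suminf_le sa norm_sqrt_series_term_le assms) (subst summable_Suc_iff)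
  also have "\<dots> = (\<Sum>n. \<bar>sqrt_coeff n\<bar>) - 1"
    using suminf_split_head[OF summable_abs_sqrt_coeff] by simp
  also have "\<dots> \<le> 1" using suminf_abs_sqrt_coeff_le by simp
  finally show ?thesis .
qed

lemma sqrt_one_minus_commute:
  fixes x y :: "'a::{real_normed_algebra_1,banach}"
  assumes "norm x \<le> 1" "y * x = x * y"
  shows "y * sqrt_one_minus x = sqrt_one_minus x * y"
proof -
  note s = summable_sqrt_series[OF assms(1)]
  have "y * sqrt_one_minus x = (\<Sum>n. y * (sqrt_coeff n *\<^sub>R x ^ n))"
    unfolding sqrt_one_minus_def by (rule suminf_mult[OF s, symmetric])
  also have "\<dots> = (\<Sum>n. sqrt_coeff n *\<^sub>R x ^ n * y)"
    using power_commuting_commutes[OF assms(2)[symmetric]] by simp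
  also have "\<dots> = sqrt_one_minus x * y"
    unfolding sqrt_one_minus_def by (rule suminf_mult2[OF s, symmetric])
  finally show ?thesis .
qed

lemma invol_sqrt_one_minus:
  fixes x :: "'a::cstar_algebra"
  assumes "norm x \<le> 1" "invol x = x"
  shows "invol (sqrt_one_minus x) = sqrt_one_minus x"
proof -
  note s = summable_sqrt_series[OF assms(1)]
  show ?thesis
    unfolding sqrt_one_minus_def bounded_linear.suminf[OF bounded_linear_invol s]
    by (simp add: invol_scaleR invol_power assms(2))
qed

section \<open>Positive elements\<close>

text \<open>Two spectrum-free renderings of positivity: \<open>npos h\<close> says that \<open>h\<close> is self-adjoint with
  spectrum in some \<open>[0, 2t]\<close>, and \<open>spos g\<close> that no negative real lies in the spectrum of \<open>g\<close>.\<close>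

definition npos :: "'a::cstar_algebra \<Rightarrow> bool" where
  "npos h \<longleftrightarrow> invol h = h \<and> (\<exists>t\<ge>0. norm (of_real t - h) \<le> t)"

definition spos :: "'a::real_algebra_1 \<Rightarrow> bool" where
  "spos g \<longleftrightarrow> (\<forall>l>0. invertible_elem (g + of_real l))"

lemma npos_selfadjoint: "npos h \<Longrightarrow> invol h = h"
  by (simp add: npos_def)

lemma npos_zero [simp]: "npos (0::'a::cstar_algebra)"
  by (auto simp: npos_def)

lemma npos_add: "npos a \<Longrightarrow> npos b \<Longrightarrow> npos (a + b)"
  unfolding npos_def
proof (elim conjE exE)
  fix s t assume *: "invol a = a" "invol b = b" "0 \<le> s" "norm (of_real s - a) \<le> s"
    "0 \<le> t" "norm (of_real t - b) \<le> t"
  have "norm (of_real (s + t) - (a + b)) = norm ((of_real s - a) + (of_real t - b))"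
    by (simp add: algebra_simps)
  also have "\<dots> \<le> s + t" using * by (meson add_mono norm_triangle_ineq order_trans)
  finally show "invol (a + b) = a + b \<and> (\<exists>t\<ge>0. norm (of_real t - (a + b)) \<le> t)"
    using * by (auto simp: invol_add intro!: exI[of _ "s + t"])
qed

lemma npos_scaleR: "0 \<le> c \<Longrightarrow> npos a \<Longrightarrow> npos (c *\<^sub>R a)"
  unfolding npos_def
proof (elim conjE exE)
  fix t assume *: "0 \<le> c" "invol a = a" "0 \<le> t" "norm (of_real t - a) \<le> t"
  have "norm (of_real (c * t) - c *\<^sub>R a) = c * norm (of_real t - a)"
    by (metis *(1) abs_of_nonneg norm_scaleR of_real_mult scaleR_conv_of_real
        scaleR_right_diff_distrib)
  also have "\<dots> \<le> c * t" using * by (simp add: mult_left_mono)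
  finally show "invol (c *\<^sub>R a) = c *\<^sub>R a \<and> (\<exists>t\<ge>0. norm (of_real t - c *\<^sub>R a) \<le> t)"
    using * by (auto simp: invol_scaleR intro!: exI[of _ "c * t"])
qed

lemma npos_of_real_minus: "invol h = h \<Longrightarrow> norm h \<le> t \<Longrightarrow> npos (of_real t - h)"
  unfolding npos_def using norm_ge_zero[of h]
  by (auto simp: invol_diff intro!: exI[of _ t] simp del: norm_ge_zero)

lemma npos_of_real_imp_nonneg: "npos (of_real c :: 'a::cstar_algebra) \<Longrightarrow> 0 \<le> c"
  unfolding npos_def
proof (elim conjE exE)
  fix t assume "0 \<le> t" "norm (of_real t - of_real c :: 'a) \<le> t"
  then have "\<bar>t - c\<bar> \<le> t" by (metis norm_of_real of_real_diff)
  then show "0 \<le> c" by linarith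
qed

lemma npos_sqrt:
  fixes a :: "'a::cstar_algebra"
  assumes "npos a"
  obtains r where "npos r" "r * r = a" "\<And>y. y * a = a * y \<Longrightarrow> y * r = r * y"
proof -
  obtain t where a_sa: "invol a = a" and t: "0 \<le> t" "norm (of_real t - a) \<le> t"
    using assms unfolding npos_def by blast
  show ?thesis
  proof (cases "t = 0")
    case True
    then have "a = 0" using t by simp
    then show ?thesis by (intro that[of 0]) simp_all
  next
    case False
    then have t_pos: "t > 0" using t by simp
    define x where "x = (1 / t) *\<^sub>R (of_real t - a)"
    have x_sa: "invol x = x" unfolding x_def by (simp add: invol_scaleR invol_diff a_sa)
    have x_le: "norm x \<le> 1" unfolding x_def norm_scaleR using t t_pos by (simp add: field_simps)
    define r where "r = sqrt t *\<^sub>R sqrt_one_minus x"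
    have "r * r = t *\<^sub>R (1 - x)" unfolding r_def using sqrt_one_minus_square[OF x_le] t by simp
    also have "\<dots> = a" unfolding x_def using t_pos
      by (simp add: scaleR_right_diff_distrib of_real_def)
    finally have "r * r = a" .
    moreover have "npos r"
    proof -
      have "norm (of_real (sqrt t) - r) = sqrt t * norm (1 - sqrt_one_minus x)"
        unfolding r_def
        by (metis abs_of_nonneg norm_scaleR of_real_def real_sqrt_ge_zero
            scaleR_right_diff_distrib t(1))
      also have "\<dots> \<le> sqrt t" using norm_one_minus_sqrt_one_minus_le[OF x_le] t
        by (simp add: mult_left_le)
      finally show ?thesis unfolding npos_def r_def using invol_sqrt_one_minus[OF x_le x_sa] t
        by (auto simp: invol_scaleR intro!: exI[of _ "sqrt t"])
    qed
    moreover have "y * r = r * y" if "y * a = a * y" for y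
    proof -
      have "y * x = x * y" unfolding x_def using that
        by (simp add: algebra_simps of_real_mult_commute)
      then show ?thesis unfolding r_def by (simp add: sqrt_one_minus_commute[OF x_le])
    qed
    ultimately show ?thesis using that by blast
  qed
qed

text \<open>\<open>Z = k + i m\<close> satisfies \<open>Z\<^sup>* Z = k\<^sup>2 + m\<^sup>2\<close>, and \<open>k = (Z + Z\<^sup>*) / 2\<close>.\<close>
lemma norm_square_le_norm_add_squares:
  fixes k m :: "'a::cstar_algebra"
  assumes k_sa: "invol k = k" and m_sa: "invol m = m" and "k * m = m * k"
  shows "(norm k)\<^sup>2 \<le> norm (k * k + m * m)"
proof -
  define Z where "Z = k + scaleC \<i> m"
  have Z_star: "invol Z = k - scaleC \<i> m"
    unfolding Z_def by (simp add: invol_add invol_scaleC_ii k_sa m_sa)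
  have "invol Z * Z = (k - scaleC \<i> m) * (k + scaleC \<i> m)" using Z_star Z_def by simp
  also have "\<dots> = k * k + k * scaleC \<i> m - scaleC \<i> m * k - scaleC \<i> m * scaleC \<i> m"
    by (simp add: algebra_simps)
  also have "k * scaleC \<i> m = scaleC \<i> (k * m)" by (simp add: scaleC_mult_right)
  also have "scaleC \<i> m * k = scaleC \<i> (m * k)" by (simp add: scaleC_mult_left)
  finally have "invol Z * Z = k * k + m * m" using assms(3) by (simp add: scaleC_ii_mult_self)
  then have norm_Z: "(norm Z)\<^sup>2 = norm (k * k + m * m)" by (metis cstar_identity)
  have "Z + invol Z = 2 *\<^sub>R k" unfolding Z_star by (simp add: Z_def scaleR_2)
  then have "2 * norm k \<le> norm Z + norm (invol Z)"
    by (metis norm_scaleR abs_numeral norm_triangle_ineq)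
  then have "norm k \<le> norm Z" by simp
  then show ?thesis using norm_Z by (metis norm_ge_zero power_mono)
qed

text \<open>For \<open>C = k / norm k\<close> and \<open>m = (1 - C\<^sup>2)\<^sup>1\<^sup>/\<^sup>2\<close>:
  \<open>norm (1 - C\<^sup>2) = (norm m)\<^sup>2 \<le> norm (m\<^sup>2 + C\<^sup>2) = 1\<close>.\<close>
lemma npos_square:
  fixes k :: "'a::cstar_algebra"
  assumes k_sa: "invol k = k"
  shows "npos (k * k)"
proof (cases "k = 0")
  case False
  define C where "C = (1 / norm k) *\<^sub>R k"
  have C_sa: "invol C = C" unfolding C_def by (simp add: invol_scaleR k_sa)
  have norm_C: "norm C = 1" unfolding C_def using False by simp
  define x where "x = C * C"
  have x_sa: "invol x = x" unfolding x_def by (simp add: invol_mult C_sa)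
  have x_le: "norm x \<le> 1" unfolding x_def using norm_mult_self_selfadjoint[OF C_sa] norm_C by simp
  define m where "m = sqrt_one_minus x"
  have m_sa: "invol m = m" unfolding m_def by (rule invol_sqrt_one_minus[OF x_le x_sa])
  have mm: "m * m = 1 - x" unfolding m_def by (rule sqrt_one_minus_square[OF x_le])
  have "m * C = C * m"
    unfolding m_def
      by (rule sqrt_one_minus_commute[OF x_le, symmetric]) (simp add: x_def mult.assoc)
  then have "(norm m)\<^sup>2 \<le> norm (m * m + C * C)"
    by (rule norm_square_le_norm_add_squares[OF m_sa C_sa])
  then have "norm (1 - x) \<le> 1" using mm norm_mult_self_selfadjoint[OF m_sa] by (simp add: x_def)
  then have "npos x" unfolding npos_def using x_sa by (auto intro!: exI[of _ 1])
  moreover have "k * k = (norm k * norm k) *\<^sub>R x" unfolding x_def C_def using False by simp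
  ultimately show ?thesis by (simp add: npos_scaleR)
qed simp

text \<open>With \<open>t = norm (h + g)\<close>, both \<open>h = k\<^sup>2\<close> and \<open>t - h = m\<^sup>2\<close> have commuting square roots, and
  \<open>norm h = (norm k)\<^sup>2 \<le> norm (k\<^sup>2 + m\<^sup>2) = t\<close>.\<close>
lemma npos_norm_le_add:
  fixes h g :: "'a::cstar_algebra"
  assumes h: "npos h" and g: "npos g"
  shows "norm h \<le> norm (h + g)"
proof -
  define t where "t = norm (h + g)"
  have h_sa: "invol h = h" and g_sa: "invol g = g" using h g by (simp_all add: npos_selfadjoint)
  have "npos (of_real t - (h + g))"
    using h_sa g_sa by (intro npos_of_real_minus) (simp_all add: invol_add t_def)
  then have "npos (of_real t - (h + g) + g)" using g by (rule npos_add)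
  then have rest: "npos (of_real t - h)" by simp
  obtain k where k: "npos k" "k * k = h" "\<And>y. y * h = h * y \<Longrightarrow> y * k = k * y"
    using npos_sqrt[OF h] by blast
  obtain m where m: "npos m" "m * m = of_real t - h"
    "\<And>y. y * (of_real t - h) = (of_real t - h) * y \<Longrightarrow> y * m = m * y"
    using npos_sqrt[OF rest] by blast
  have "k * h = h * k" using k(2) by (metis mult.assoc)
  then have "k * (of_real t - h) = (of_real t - h) * k"
    by (simp add: algebra_simps of_real_mult_commute)
  then have "(norm k)\<^sup>2 \<le> norm (k * k + m * m)"
    using m(3) by (intro norm_square_le_norm_add_squares npos_selfadjoint k(1) m(1)) simp
  also have "k * k + m * m = of_real t" using k(2) m(2) by simp
  finally show ?thesis using k(2) norm_mult_self_selfadjoint[OF npos_selfadjoint[OF k(1)]]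
    by (simp add: t_def)
qed

lemma npos_mult_commuting:
  fixes a b :: "'a::cstar_algebra"
  assumes "npos a" "npos b" "a * b = b * a"
  shows "npos (a * b)"
proof -
  obtain p where p: "npos p" "p * p = a" "\<And>y. y * a = a * y \<Longrightarrow> y * p = p * y"
    using npos_sqrt[OF assms(1)] by blast
  obtain q where q: "npos q" "q * q = b" "\<And>y. y * b = b * y \<Longrightarrow> y * q = q * y"
    using npos_sqrt[OF assms(2)] by blast
  have "p * q = q * p" using q(3) p(3) assms(3) by metis
  then have "a * b = (p * q) * (p * q)" using p(2) q(2) by (metis mult.assoc)
  moreover have "invol (p * q) = p * q"
    using \<open>p * q = q * p\<close> by (intro selfadjoint_mult_commuting npos_selfadjoint p(1) q(1))
  ultimately show ?thesis using npos_square by metis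
qed

text \<open>If \<open>R\<close> inverted \<open>1 - g\<close>, then \<open>(norm R - R)(1 - g) = (norm R - 1) - norm R g\<close> would be
  positive, and adding \<open>norm R g\<close> to it would give \<open>norm R \<le> \<bar>norm R - 1\<bar>\<close> and \<open>norm R \<ge> 1\<close>.\<close>
lemma not_invertible_one_minus_npos:
  fixes g :: "'a::cstar_algebra"
  assumes g: "npos g" and norm_g: "norm g = 1"
  shows "\<not> invertible_elem (1 - g)"
proof
  assume "invertible_elem (1 - g)"
  then obtain R where R: "(1 - g) * R = 1" "R * (1 - g) = 1" unfolding invertible_elem_def by blast
  have g_sa: "invol g = g" using g by (rule npos_selfadjoint)
  have R_sa: "invol R = R" by (rule selfadjoint_inverse[OF _ R]) (simp add: invol_diff g_sa)
  define M where "M = norm R"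
  have "g * R = R - 1" "R * g = R - 1" using R by (simp_all add: algebra_simps)
  then have gR: "R * g = g * R" by simp
  have "npos ((of_real M - R) * (1 - g))"
  proof (rule npos_mult_commuting)
    show "npos (of_real M - R)" using npos_of_real_minus[OF R_sa] by (simp add: M_def)
    show "npos (1 - g)" using npos_of_real_minus[OF g_sa, of 1] norm_g by simp
    show "(of_real M - R) * (1 - g) = (1 - g) * (of_real M - R)"
      by (simp add: algebra_simps of_real_mult_commute gR)
  qed
  moreover have "(of_real M - R) * (1 - g) = of_real M * (1 - g) - R * (1 - g)"
    by (rule left_diff_distrib)
  also have "\<dots> = of_real (M - 1) - M *\<^sub>R g"
    unfolding R(2) by (simp add: algebra_simps scaleR_conv_of_real)
  ultimately have diff: "npos (of_real (M - 1) - M *\<^sub>R g)" by simp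
  have scaled: "npos (M *\<^sub>R g)" using g by (intro npos_scaleR) (simp_all add: M_def)
  have "norm (M *\<^sub>R g) \<le> norm (M *\<^sub>R g + (of_real (M - 1) - M *\<^sub>R g))"
    by (rule npos_norm_le_add[OF scaled diff])
  then have "M \<le> \<bar>M - 1\<bar>" using norm_g norm_of_real[of "M - 1", where 'a = 'a] by (simp add: M_def)
  moreover have "npos (M *\<^sub>R g + (of_real (M - 1) - M *\<^sub>R g))" by (rule npos_add[OF scaled diff])
  then have "0 \<le> M - 1" by (intro npos_of_real_imp_nonneg) simp
  ultimately show False by simp
qed

lemma npos_imp_spos: "npos g \<Longrightarrow> spos (g::'a::cstar_algebra)"
  unfolding spos_def
proof (intro allI impI)
  fix l :: real assume g: "npos g" and l: "0 < l"
  obtain t where t: "0 \<le> t" "norm (of_real t - g) \<le> t" using g unfolding npos_def by blast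
  define s where "s = t + l"
  have s_pos: "s > 0" using t l by (simp add: s_def)
  define y where "y = (1 / s) *\<^sub>R (g + of_real l)"
  have "1 - y = (1 / s) *\<^sub>R (of_real s - (g + of_real l))"
    unfolding y_def using s_pos by (simp add: scaleR_right_diff_distrib of_real_def)
  also have "of_real s - (g + of_real l) = of_real t - g" by (simp add: s_def)
  finally have "norm (1 - y) = norm (of_real t - g) / s" using s_pos by simp
  also have "\<dots> < 1" using t l s_pos by (simp add: s_def)
  finally have "invertible_elem (s *\<^sub>R y)"
    using s_pos by (intro invertible_elem_scaleR invertible_elem_near_one) simp_all
  then show "invertible_elem (g + of_real l)" using s_pos by (simp add: y_def)
qed

text \<open>Otherwise \<open>f = norm g - g\<close> has \<open>norm f > norm g\<close>, and \<open>1 - f / norm f\<close> is a positive multiple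
  of \<open>g + (norm f - norm g)\<close>, so it is invertible, contradicting the previous lemma.\<close>
lemma spos_imp_npos:
  fixes g :: "'a::cstar_algebra"
  assumes g_sa: "invol g = g" and "spos g"
  shows "npos g"
proof -
  define t where "t = norm g"
  define f where "f = of_real t - g"
  have f: "npos f" unfolding f_def t_def by (rule npos_of_real_minus[OF g_sa]) simp
  show ?thesis
  proof (cases "norm f \<le> t")
    case True
    then show ?thesis unfolding npos_def using g_sa by (auto simp: f_def t_def intro!: exI[of _ t])
  next
    case False
    then have f_pos: "norm f > 0" using norm_ge_zero[of g] unfolding t_def by linarith
    have "\<not> invertible_elem (1 - (1 / norm f) *\<^sub>R f)"
      using f f_pos by (intro not_invertible_one_minus_npos npos_scaleR) simp_all
    moreover have "1 - (1 / norm f) *\<^sub>R f = (1 / norm f) *\<^sub>R (g + of_real (norm f - t))"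
      using f_pos by (simp add: f_def of_real_def algebra_simps)
    moreover have "invertible_elem (g + of_real (norm f - t))"
      using \<open>spos g\<close> False unfolding spos_def by (metis diff_gt_0_iff_gt not_le)
    ultimately show ?thesis using f_pos by (simp add: invertible_elem_scaleR)
  qed
qed

lemma spos_mult_swap: "spos (x * y) \<Longrightarrow> spos (y * (x::'a::real_algebra_1))"
  unfolding spos_def using invertible_elem_of_real_add_mult_swap by (metis add.commute less_irrefl)

lemma selfadjoint_cube_eq_zero: "invol v = v \<Longrightarrow> v * v * v = 0 \<Longrightarrow> v = (0::'a::cstar_algebra)"
proof -
  assume v_sa: "invol v = v" and "v * v * v = 0"
  then have "(v * v) * (v * v) = 0" by (metis mult.assoc mult_zero_left)
  then have "v * v = 0" using norm_mult_self_selfadjoint[of "v * v"] by (simp add: invol_mult v_sa)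
  then show "v = 0" using norm_mult_self_selfadjoint[OF v_sa] by simp
qed

lemma npos_cube: "npos v \<Longrightarrow> npos (v * v * (v::'a::cstar_algebra))"
  by (intro npos_mult_commuting npos_square npos_selfadjoint) (simp_all add: mult.assoc)

text \<open>Here \<open>a = |h|\<close>; for \<open>l > 0\<close> the commuting factors \<open>a + h + l\<close> and \<open>a - h + l\<close> have the
  invertible product \<open>2 l (a + l/2)\<close>.\<close>
lemma npos_abs_add:
  fixes a h :: "'a::cstar_algebra"
  assumes a: "npos a" and h_sa: "invol h = h" and aa: "a * a = h * h" and ha: "h * a = a * h"
  shows "npos (a + h)"
proof (rule spos_imp_npos)
  show "invol (a + h) = a + h" using npos_selfadjoint[OF a] h_sa by (simp add: invol_add)
  show "spos (a + h)" unfolding spos_def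
  proof (intro allI impI)
    fix l :: real assume l: "l > 0"
    have "(a + h + of_real l) * (a - h + of_real l) = (2 * l) *\<^sub>R (a + of_real (l / 2))"
      "(a - h + of_real l) * (a + h + of_real l) = (2 * l) *\<^sub>R (a + of_real (l / 2))"
      using aa ha unfolding of_real_def
        by (simp_all add: algebra_simps scaleR_2 scaleR_add_left[symmetric])
    moreover have "invertible_elem ((2 * l) *\<^sub>R (a + of_real (l / 2)))"
      using npos_imp_spos[OF a] l unfolding spos_def by (intro invertible_elem_scaleR) simp_all
    ultimately show "invertible_elem (a + h + of_real l)"
      using invertible_elem_commuting_factor[of "a + h + of_real l" "a - h + of_real l"] by simp
  qed
qed

text \<open>With \<open>c = x + i y\<close> for self-adjoint \<open>x, y\<close>: \<open>c c\<^sup>* + c\<^sup>* c = 2 (x\<^sup>2 + y\<^sup>2)\<close>.\<close>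
lemma npos_mult_star_add_star_mult: "npos (c * invol c + invol c * (c::'a::cstar_algebra))"
proof -
  define c' where "c' = invol c"
  define x where "x = (1/2) *\<^sub>R (c + c')"
  define y where "y = (1/2) *\<^sub>R scaleC \<i> (c' - c)"
  have "invol x = x" unfolding x_def c'_def
    by (simp add: invol_scaleR invol_add invol_invol add.commute)
  moreover have "invol y = y" unfolding y_def c'_def
    by (simp add: invol_scaleR invol_scaleC_ii invol_diff invol_invol scaleC_minus_right[symmetric])
  ultimately have "npos (x * x + y * y)" by (intro npos_add npos_square)
  moreover have "x * x + y * y = (1/4) *\<^sub>R ((c + c') * (c + c') - (c' - c) * (c' - c))"
    unfolding x_def y_def by (simp add: scaleC_ii_mult_self scaleR_right_diff_distrib)
  moreover have "(c + c') * (c + c') - (c' - c) * (c' - c) = 2 *\<^sub>R (c * c' + c' * c)"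
    by (simp add: algebra_simps scaleR_2)
  ultimately have "npos ((1/2) *\<^sub>R (c * c' + c' * c))" by simp
  then have "npos (c * c' + c' * c)" using npos_scaleR[of 2 "(1/2) *\<^sub>R (c * c' + c' * c)"] by simp
  then show ?thesis by (simp only: c'_def)
qed

text \<open>\<open>c c\<^sup>* = (c c\<^sup>* + c\<^sup>* c) - c\<^sup>* c\<close> is positive, hence so is \<open>c\<^sup>* c\<close> by Jacobson's lemma.\<close>
lemma star_mult_self_eq_zero_if_npos_neg:
  fixes c :: "'a::cstar_algebra"
  assumes neg: "npos (- (invol c * c))"
  shows "invol c * c = 0"
proof -
  have "npos (c * invol c + invol c * c + - (invol c * c))"
    using npos_mult_star_add_star_mult neg by (rule npos_add)
  then have "npos (c * invol c)" by simp
  then have "spos (invol c * c)" by (rule spos_mult_swap[OF npos_imp_spos])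
  then have "npos (invol c * c)" by (rule spos_imp_npos[rotated]) (simp add: invol_mult invol_invol)
  then have "norm (invol c * c) \<le> norm (invol c * c + - (invol c * c))"
    using neg by (rule npos_norm_le_add)
  then show ?thesis by simp
qed

text \<open>Write \<open>h = b\<^sup>* b\<close> and \<open>a = |h|\<close>, so that \<open>v = a - h\<close> is twice the negative part of \<open>h\<close>.
  Then \<open>(b v)\<^sup>* (b v) = v h v = - v\<^sup>3 / 2\<close> is negative, hence zero; so \<open>v = 0\<close> and \<open>h = a\<close>.\<close>
theorem npos_star_mult_self: "npos (invol b * (b::'a::cstar_algebra))"
proof -
  define h where "h = invol b * b"
  have h_sa: "invol h = h" unfolding h_def by (simp add: invol_mult invol_invol)
  obtain a where a: "npos a" "a * a = h * h" "\<And>y. y * (h * h) = (h * h) * y \<Longrightarrow> y * a = a * y"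
    using npos_sqrt[OF npos_square[OF h_sa]] by blast
  have ha: "h * a = a * h" by (rule a(3)) (simp add: mult.assoc)
  have "npos (a + - h)" by (rule npos_abs_add[OF a(1)]) (simp_all add: h_sa a(2) ha)
  define v where "v = a - h"
  then have v: "npos v" using \<open>npos (a + - h)\<close> by simp
  have v_sa: "invol v = v" using v by (rule npos_selfadjoint)
  have vah: "v * (a + h) = 0" unfolding v_def using a(2) ha by (simp add: algebra_simps)
  have two_h: "2 *\<^sub>R h = (a + h) - v" by (simp add: v_def scaleR_2)
  have "2 *\<^sub>R (v * h * v) = v * (2 *\<^sub>R h) * v" by simp
  also have "\<dots> = v * (a + h) * v - v * v * v" unfolding two_h by (simp add: algebra_simps)
  also have "\<dots> = - (v * v * v)" using vah by simp
  finally have twice: "2 *\<^sub>R (v * h * v) = - (v * v * v)" .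
  have star: "invol (b * v) * (b * v) = v * h * v"
    unfolding h_def by (simp add: invol_mult v_sa mult.assoc)
  have "- (v * h * v) = (1/2) *\<^sub>R (v * v * v)"
    using arg_cong[OF twice, of "\<lambda>z. - ((1/2) *\<^sub>R z)"] by simp
  then have "npos (- (invol (b * v) * (b * v)))"
    unfolding star using npos_cube[OF v] by (simp add: npos_scaleR)
  then have "invol (b * v) * (b * v) = 0" by (rule star_mult_self_eq_zero_if_npos_neg)
  then have "v * v * v = 0" using star twice by simp
  then have "v = 0" by (rule selfadjoint_cube_eq_zero[OF v_sa])
  then show ?thesis using a(1) by (simp add: v_def h_def)
qed

lemma cpos_imp_npos: "cpos a \<Longrightarrow> npos (a::'a::cstar_algebra)"
  unfolding cpos_def using npos_star_mult_self by blast

section \<open>Hilbert modules\<close>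

context
  fixes act :: "'a::cstar_algebra \<Rightarrow> 'h::ab_group_add \<Rightarrow> 'h" and ip :: "'h \<Rightarrow> 'h \<Rightarrow> 'a"
  assumes hm: "hilbert_module act ip"
begin

lemma act_one: "act 1 x = x"
  using hm unfolding hilbert_module_def by metis

lemma ip_act_add_left: "ip (act a x + y) z = a * ip x z + ip y z"
  using hm unfolding hilbert_module_def by metis

lemma ip_sym: "ip x y = invol (ip y x)"
  using hm unfolding hilbert_module_def by metis

lemma ip_self_cpos: "cpos (ip x x)"
  using hm unfolding hilbert_module_def by metis

lemma ip_self_eq_zero: "ip x x = 0 \<Longrightarrow> x = 0"
  using hm unfolding hilbert_module_def by metis

lemma ip_add_left: "ip (x + y) z = ip x z + ip y z"
  using ip_act_add_left[of 1 x y z] by (simp add: act_one)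

lemma ip_diff_left: "ip (x - y) z = ip x z - ip y z"
  using ip_add_left[of "x - y" y z] by (simp add: eq_diff_eq)

lemma ip_diff_right: "ip z (x - y) = ip z x - ip z y"
  using ip_sym[of z "x - y"] ip_sym[of z x] ip_sym[of z y] by (simp add: ip_diff_left invol_diff)

lemma ip_add_right: "ip z (x + y) = ip z x + ip z y"
  using ip_sym[of z "x + y"] ip_sym[of z x] ip_sym[of z y] by (simp add: ip_add_left invol_add)

lemma ip_self_npos: "npos (ip x x)"
  using ip_self_cpos cpos_imp_npos by blast

lemma hnorm_limit_unique:
  assumes v: "(\<lambda>n. hnorm ip (X n - v)) \<longlonglongrightarrow> 0" and w: "(\<lambda>n. hnorm ip (X n - w)) \<longlonglongrightarrow> 0"
  shows "v = w"
proof -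
  have bound:
    "norm (ip (w - v) (w - v)) \<le> 2 * (hnorm ip (X n - v))\<^sup>2 + 2 * (hnorm ip (X n - w))\<^sup>2" for n
  proof -
    define p where "p = X n - v"
    define q where "q = X n - w"
    have diff: "w - v = p - q" unfolding p_def q_def by simp
    have parallelogram:
      "ip (p - q) (p - q) + ip (p + q) (p + q) = (ip p p + ip p p) + (ip q q + ip q q)"
      by (simp add: ip_add_left ip_add_right ip_diff_left ip_diff_right algebra_simps)
    have "norm (ip (p - q) (p - q)) \<le> norm (ip (p - q) (p - q) + ip (p + q) (p + q))"
      by (rule npos_norm_le_add[OF ip_self_npos ip_self_npos])
    then have "norm (ip (w - v) (w - v)) \<le> norm ((ip p p + ip p p) + (ip q q + ip q q))"
      unfolding diff parallelogram .
    also have "\<dots> \<le> 2 * norm (ip p p) + 2 * norm (ip q q)"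
      using norm_triangle_ineq[of "ip p p + ip p p" "ip q q + ip q q"]
        norm_triangle_ineq[of "ip p p" "ip p p"] norm_triangle_ineq[of "ip q q" "ip q q"]
          by linarith
    finally show ?thesis by (simp add: hnorm_def p_def q_def)
  qed
  have "(\<lambda>n. 2 * (hnorm ip (X n - v))\<^sup>2 + 2 * (hnorm ip (X n - w))\<^sup>2) \<longlonglongrightarrow> 2 * 0\<^sup>2 + 2 * 0\<^sup>2"
    by (intro tendsto_intros v w)
  then have "(\<lambda>n. 2 * (hnorm ip (X n - v))\<^sup>2 + 2 * (hnorm ip (X n - w))\<^sup>2) \<longlonglongrightarrow> 0" by simp
  then have "norm (ip (w - v) (w - v)) \<le> 0"
    by (rule LIMSEQ_le_const) (use bound in auto)
  then have "ip (w - v) (w - v) = 0" by simp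
  then have "w - v = 0" by (rule ip_self_eq_zero)
  then show ?thesis by simp
qed

lemma hsums_unique: "hsums ip f J v \<Longrightarrow> hsums ip f J w \<Longrightarrow> v = w"
  unfolding hsums_def by (rule hnorm_limit_unique)

lemma adjoint_eq_id_imp_eq_id:
  assumes adj: "\<And>u w. ip (T u) w = ip u (S w)" and "\<And>w. S w = w"
  shows "T = id"
proof
  fix u
  have "ip (T u - u) w = 0" for w using adj[of u w] assms(2)[of w] by (simp add: ip_diff_left)
  then have "T u - u = 0" by (rule ip_self_eq_zero)
  then show "T u = id u" by simp
qed

lemma adjoint_fixes_if_maps_alt_dual:
  assumes y: "\<And>v. hsums ip (\<lambda>j. act (ip v (y j)) (x j)) J v"
    and z: "\<And>v. hsums ip (\<lambda>j. act (ip v (z j)) (x j)) J v"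
    and adj: "\<And>u w. ip (T u) w = ip u (S w)"
    and zy: "\<forall>j\<in>J. z j = T (y j)"
  shows "S v = v"
proof -
  have coeff: "ip (S v) (y j) = ip v (z j)" if "j \<in> J" for j
    using ip_sym[of "S v" "y j"] ip_sym[of v "z j"] adj[of "y j" v] zy that by simp
  have "(\<Sum>j\<in>J \<inter> {..<n}. act (ip (S v) (y j)) (x j)) = (\<Sum>j\<in>J \<inter> {..<n}. act (ip v (z j)) (x j))" for n
    by (rule sum.cong) (simp_all add: coeff)
  then have "hsums ip (\<lambda>j. act (ip v (z j)) (x j)) J (S v)"
    using y[of "S v"] unfolding hsums_def by simp
  then show ?thesis using z by (rule hsums_unique)
qed

end

theorem proposition6p7:
  fixes act :: "'a::cstar_algebra \<Rightarrow> 'h::ab_group_add \<Rightarrow> 'h"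
    and ip :: "'h \<Rightarrow> 'h \<Rightarrow> 'a"
    and x y z :: "nat \<Rightarrow> 'h"
    and J :: "nat set"
    and T :: "'h \<Rightarrow> 'h"
  assumes "hilbert_module act ip"
    and "standard_frame act ip x J"
    and "standard_alt_dual act ip x y J"
    and "standard_alt_dual act ip x z J"
    and "invertible_operator act ip T"
    and "\<forall>j\<in>J. z j = T (y j)"
  shows "T = id"
proof -
  obtain S where adj: "\<And>u w. ip (T u) w = ip u (S w)"
    using assms(5) unfolding invertible_operator_def good_operator_def adjointable_def by blast
  have y: "\<And>v. hsums ip (\<lambda>j. act (ip v (y j)) (x j)) J v"
    using assms(3) unfolding standard_alt_dual_def by blast
  have z: "\<And>v. hsums ip (\<lambda>j. act (ip v (z j)) (x j)) J v"
    using assms(4) unfolding standard_alt_dual_def by blast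
  have "S v = v" for v by (rule adjoint_fixes_if_maps_alt_dual[OF assms(1) y z adj assms(6)])
  then show ?thesis by (rule adjoint_eq_id_imp_eq_id[OF assms(1) adj])
qed

end
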